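(* Let $T>0$ and let $\mathbb{T}^2=(\mathbb{R}/T\mathbb{Z})\times(\mathbb{R}/2\pi\mathbb{Z})$ with coordinates $(t,x)$ and volume form $dV=dt\wedge dx$. Assume that $\mathcal{R}=\frac{2\pi}{T}$ has irrationality measure equal to $2$. Let \[ M_1=\begin{pmatrix}0&-1&0&0\\1&0&0&0\\0&0&0&1\\0&0&-1&0\end{pmatrix},\qquad M_2=\begin{pmatrix}0&0&1&0\\0&0&0&-1\\-1&0&0&0\\0&1&0&0\end{pmatrix}. \] Let $\widetilde{Z}:\mathbb{R}\times\mathbb{T}^2\to\mathbb{R}^4$ be a smooth map satisfying \[ \partial_s\widetilde{Z}(s,t,x)+M_1\partial_t\widetilde{Z}(s,t,x)+M_2\partial_x\widetilde{Z}(s,t,x)=0 \] for all $(s,t,x)$, with finite energy \[ E(\widetilde{Z})=\int_{-\infty}^{+\infty}\left(\int_{\mathbb{T}^2}|\partial_s\widetilde{Z}(s,t,x)|^2\,dV\right)ds<+\infty, \] and such that for every $s\in\mathbb{R}$ the map $\widetilde{Z}_s:=\widetilde{Z}(s,\cdot,\cdot)$ has mean zero, i.e. $\int_{\mathbb{T}^2}\widetilde{Z}_s\,dV=0$. Then $\lim_{s\to+\infty}\widetilde{Z}_s=0$ in $C^\infty(\mathbb{T}^2,\mathbb{R}^4)$.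
   Context: The irrationality measure of a real number $r$ is the infimum of all $\rho$ for which there exists a constant $c$ such that $\frac{c}{q^\rho}<|r-\frac{p}{q}|$ for all $\frac{p}{q}\in\mathbb{Q}$. The assumption that $\mathcal{R}$ has irrationality measure $2$ is a standing assumption of the section in which the lemma is stated. *)

theory Defs
  imports "HOL-Analysis.Analysis"
begin

text \<open>Irrationality measure: infimum (in the extended reals, so that the empty set
  gives +infinity) of all rho for which some constant c > 0 satisfies
  c / q^rho < |r - p/q| for all p/q with q > 0.\<close>
definition irrationality_measure :: "real \<Rightarrow> ereal" where
  "irrationality_measure r =
     Inf {ereal \<rho> | \<rho>. \<exists>c>0. \<forall>p::int. \<forall>q::int. q > 0 \<longrightarrow>
            c / (real_of_int q) powr \<rho> < \<bar>r - real_of_int p / real_of_int q\<bar>}"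

definition pd_s :: "(real \<Rightarrow> real \<Rightarrow> real \<Rightarrow> real^4) \<Rightarrow> real \<Rightarrow> real \<Rightarrow> real \<Rightarrow> real^4" where
  "pd_s f = (\<lambda>s t x. vector_derivative (\<lambda>\<sigma>. f \<sigma> t x) (at s))"
definition pd_t :: "(real \<Rightarrow> real \<Rightarrow> real \<Rightarrow> real^4) \<Rightarrow> real \<Rightarrow> real \<Rightarrow> real \<Rightarrow> real^4" where
  "pd_t f = (\<lambda>s t x. vector_derivative (\<lambda>\<tau>. f s \<tau> x) (at t))"
definition pd_x :: "(real \<Rightarrow> real \<Rightarrow> real \<Rightarrow> real^4) \<Rightarrow> real \<Rightarrow> real \<Rightarrow> real \<Rightarrow> real^4" where
  "pd_x f = (\<lambda>s t x. vector_derivative (\<lambda>\<xi>. f s t \<xi>) (at x))"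

datatype pdir = Ds | Dt | Dx

fun pd_word :: "pdir list \<Rightarrow> (real \<Rightarrow> real \<Rightarrow> real \<Rightarrow> real^4) \<Rightarrow> (real \<Rightarrow> real \<Rightarrow> real \<Rightarrow> real^4)" where
  "pd_word [] f = f"
| "pd_word (Ds # w) f = pd_s (pd_word w f)"
| "pd_word (Dt # w) f = pd_t (pd_word w f)"
| "pd_word (Dx # w) f = pd_x (pd_word w f)"

definition smooth3 :: "(real \<Rightarrow> real \<Rightarrow> real \<Rightarrow> real^4) \<Rightarrow> bool" where
  "smooth3 f \<longleftrightarrow> (\<forall>w. \<forall>p::real \<times> real \<times> real.
      (\<lambda>(s,t,x). pd_word w f s t x) differentiable (at p))"

definition M1 :: "real^4^4" where
  "M1 = vector [vector [0,-1,0,0], vector [1,0,0,0], vector [0,0,0,1], vector [0,0,-1,0]]"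
definition M2 :: "real^4^4" where
  "M2 = vector [vector [0,0,1,0], vector [0,0,0,-1], vector [-1,0,0,0], vector [0,1,0,0]]"

end

(*
  Write A = M1 d/dt + M2 d/dx. Since M1 and M2 are skew, A is symmetric on L^2 of the torus,
  and the equation reads d/ds Z = - A Z. Differentiating in s, V = d/ds Z solves the same
  equation, so h(s) = |V_s|^2 satisfies h'' = 4 |d/ds V_s|^2 >= 0. A convex nonnegative
  function with finite integral over the whole real line vanishes; hence d/ds Z = 0 and A Z = 0.
  In coordinates A Z = 0 says that Z1 +- Z4 and Z2 +- Z3 are constant along the lines
  x -+ t = const, which are dense in the torus because T / (2 pi) is irrational (any finite
  irrationality measure excludes rational numbers). So every Z_s is constant, and the mean-zero
  condition forces Z = 0 identically; the convergence claim is then trivial.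
*)
theory Submission
  imports Defs
begin

type_synonym vfield = "real \<Rightarrow> real \<Rightarrow> real \<Rightarrow> real^4"

section \<open>Smooth fields\<close>

lemma pd_word_append: "pd_word v (pd_word w F) = pd_word (v @ w) F"
proof (induction v)
  case (Cons a v) then show ?case by (cases a) simp_all
qed simp

lemma smooth3_pd_word: "smooth3 F \<Longrightarrow> smooth3 (pd_word w F)"
  unfolding smooth3_def pd_word_append by blast

lemma smooth3_pd:
  assumes "smooth3 F"
  shows "smooth3 (pd_s F)" "smooth3 (pd_t F)" "smooth3 (pd_x F)"
  using smooth3_pd_word[OF assms, of "[Ds]"] smooth3_pd_word[OF assms, of "[Dt]"]
    smooth3_pd_word[OF assms, of "[Dx]"] by simp_all

lemma smooth3_differentiable:
  "smooth3 F \<Longrightarrow> (\<lambda>(s,t,x). F s t x) differentiable (at p)"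
  unfolding smooth3_def by (metis pd_word.simps(1))

lemma smooth3_continuous_on_comp:
  assumes "smooth3 F" "continuous_on S a" "continuous_on S b" "continuous_on S c"
  shows "continuous_on S (\<lambda>y. F (a y) (b y) (c y))"
proof -
  have "continuous_on UNIV (\<lambda>(s,t,x). F s t x)"
    using smooth3_differentiable[OF assms(1)]
    by (meson continuous_at_imp_continuous_on differentiable_imp_continuous_within)
  then have "continuous_on S ((\<lambda>(s,t,x). F s t x) \<circ> (\<lambda>y. (a y, b y, c y)))"
    by (intro continuous_on_compose continuous_intros assms) (auto intro: continuous_on_subset)
  then show ?thesis by (simp add: o_def)
qed

lemma has_vector_derivative_pd:
  assumes "smooth3 F"
  shows "((\<lambda>\<sigma>. F \<sigma> t x) has_vector_derivative pd_s F s t x) (at s)"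
    and "((\<lambda>\<tau>. F s \<tau> x) has_vector_derivative pd_t F s t x) (at t)"
    and "((\<lambda>\<xi>. F s t \<xi>) has_vector_derivative pd_x F s t x) (at x)"
proof -
  have chain: "(\<lambda>y. (\<lambda>(s,t,x). F s t x) (g y)) differentiable (at y)"
    if "g differentiable (at y)" for g :: "real \<Rightarrow> real \<times> real \<times> real" and y
    using differentiable_chain_at[OF that smooth3_differentiable[OF assms]] by (simp add: o_def)
  have "(\<lambda>\<sigma>. F \<sigma> t x) differentiable (at s)"
    by (rule chain[of "\<lambda>\<sigma>. (\<sigma>, t, x)", simplified])
  moreover have "(\<lambda>\<tau>. F s \<tau> x) differentiable (at t)"
    by (rule chain[of "\<lambda>\<tau>. (s, \<tau>, x)", simplified])
  moreover have "(\<lambda>\<xi>. F s t \<xi>) differentiable (at x)"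
    by (rule chain[of "\<lambda>\<xi>. (s, t, \<xi>)", simplified])
  ultimately
  show "((\<lambda>\<sigma>. F \<sigma> t x) has_vector_derivative pd_s F s t x) (at s)"
    "((\<lambda>\<tau>. F s \<tau> x) has_vector_derivative pd_t F s t x) (at t)"
    "((\<lambda>\<xi>. F s t \<xi>) has_vector_derivative pd_x F s t x) (at x)"
    unfolding pd_s_def pd_t_def pd_x_def by (simp_all add: vector_derivative_works[symmetric])
qed

lemma partial_diff_eq_integral_mixed_partial:
  fixes g :: "real \<Rightarrow> real \<Rightarrow> 'c::euclidean_space"
  assumes ga: "\<And>a b. ((\<lambda>a. g a b) has_vector_derivative ga a b) (at a)"
    and gb: "\<And>a b. ((\<lambda>b. g a b) has_vector_derivative gb a b) (at b)"
    and gba: "\<And>a b. ((\<lambda>a. gb a b) has_vector_derivative gba a b) (at a)"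
    and cont: "continuous_on UNIV (\<lambda>p. gba (fst p) (snd p))"
    and "y0 \<le> y"
  shows "ga a y - ga a y0 = integral {y0..y} (gba a)"
proof -
  have ftc: "(gb a' has_integral (g a' y - g a' y0)) {y0..y}" for a'
    using \<open>y0 \<le> y\<close>
    by (intro fundamental_theorem_of_calculus) (auto intro: has_vector_derivative_at_within gb)
  have "continuous_on (UNIV \<times> cbox y0 y) (\<lambda>(x, t). gba x t)"
    using continuous_on_subset[OF cont] by (simp add: case_prod_beta')
  then have "((\<lambda>a'. integral (cbox y0 y) (gb a'))
      has_vector_derivative integral (cbox y0 y) (gba a)) (at a within UNIV)"
    by (intro leibniz_rule_vector_derivative[where fx=gba])
      (use ftc gba in \<open>auto intro: has_vector_derivative_at_within simp: has_integral_integrable\<close>)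
  moreover have "integral (cbox y0 y) (gb a') = g a' y - g a' y0" for a'
    using ftc[of a'] by (simp add: integral_unique)
  ultimately have "((\<lambda>a'. g a' y - g a' y0) has_vector_derivative integral {y0..y} (gba a)) (at a)"
    by simp
  moreover have "((\<lambda>a'. g a' y - g a' y0) has_vector_derivative ga a y - ga a y0) (at a)"
    by (intro derivative_intros ga)
  ultimately show ?thesis by (metis vector_derivative_unique_at)
qed

lemma mixed_partials_commute:
  fixes g :: "real \<Rightarrow> real \<Rightarrow> 'c::euclidean_space"
  assumes ga: "\<And>a b. ((\<lambda>a. g a b) has_vector_derivative ga a b) (at a)"
    and gb: "\<And>a b. ((\<lambda>b. g a b) has_vector_derivative gb a b) (at b)"
    and gba: "\<And>a b. ((\<lambda>a. gb a b) has_vector_derivative gba a b) (at a)"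
    and gab: "\<And>a b. ((\<lambda>b. ga a b) has_vector_derivative gab a b) (at b)"
    and cont: "continuous_on UNIV (\<lambda>p. gba (fst p) (snd p))"
  shows "gab a b = gba a b"
proof -
  define b0 where "b0 = b - 1"
  define b1 where "b1 = b + 1"
  have eq: "ga a y - ga a b0 = integral {b0..y} (gba a)" if "b0 \<le> y" for y
    using partial_diff_eq_integral_mixed_partial[OF ga gb gba cont that] .
  have "continuous_on {b0..b1} (gba a)"
    by (rule continuous_on_compose2[OF cont, of _ "\<lambda>y. (a, y)", simplified])
      (auto intro!: continuous_intros)
  then have "((\<lambda>y. integral {b0..y} (gba a)) has_vector_derivative gba a b) (at b within {b0..b1})"
    by (rule integral_has_vector_derivative) (auto simp: b0_def b1_def)
  then have "((\<lambda>y. integral {b0..y} (gba a)) has_vector_derivative gba a b) (at b)"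
    by (simp add: at_within_Icc_at b0_def b1_def)
  then have "((\<lambda>y. ga a y - ga a b0) has_vector_derivative gba a b) (at b)"
    by (rule has_vector_derivative_transform_within_open[of _ _ _ "{b0<..<b1}"])
      (use eq in \<open>auto simp: b0_def b1_def\<close>)
  moreover have "((\<lambda>y. ga a y - ga a b0) has_vector_derivative gab a b - 0) (at b)"
    by (intro derivative_intros gab)
  ultimately show ?thesis by (metis vector_derivative_unique_at diff_zero)
qed

lemma smooth3_pd_commute:
  assumes "smooth3 F"
  shows "pd_t (pd_s F) = pd_s (pd_t F)" "pd_x (pd_s F) = pd_s (pd_x F)"
    "pd_x (pd_t F) = pd_t (pd_x F)"
proof -
  note sm = assms smooth3_pd[OF assms] smooth3_pd[OF smooth3_pd(1)[OF assms]]
     smooth3_pd[OF smooth3_pd(2)[OF assms]] smooth3_pd[OF smooth3_pd(3)[OF assms]]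
  have "pd_t (pd_s F) s t x = pd_s (pd_t F) s t x" for s t x
    by (rule mixed_partials_commute[where g="\<lambda>a b. F a b x" and ga="\<lambda>a b. pd_s F a b x"
          and gb="\<lambda>a b. pd_t F a b x"])
      (auto intro!: has_vector_derivative_pd smooth3_continuous_on_comp continuous_intros sm)
  then show "pd_t (pd_s F) = pd_s (pd_t F)" by (auto simp: fun_eq_iff)
  have "pd_x (pd_s F) s t x = pd_s (pd_x F) s t x" for s t x
    by (rule mixed_partials_commute[where g="\<lambda>a b. F a t b" and ga="\<lambda>a b. pd_s F a t b"
          and gb="\<lambda>a b. pd_x F a t b"])
      (auto intro!: has_vector_derivative_pd smooth3_continuous_on_comp continuous_intros sm)
  then show "pd_x (pd_s F) = pd_s (pd_x F)" by (auto simp: fun_eq_iff)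
  have "pd_x (pd_t F) s t x = pd_t (pd_x F) s t x" for s t x
    by (rule mixed_partials_commute[where g="\<lambda>a b. F s a b" and ga="\<lambda>a b. pd_t F s a b"
          and gb="\<lambda>a b. pd_x F s a b"])
      (auto intro!: has_vector_derivative_pd smooth3_continuous_on_comp continuous_intros sm)
  then show "pd_x (pd_t F) = pd_t (pd_x F)" by (auto simp: fun_eq_iff)
qed

section \<open>Periodic functions\<close>

lemma periodic_shift_int:
  fixes f :: "real \<Rightarrow> 'a"
  assumes "\<And>y. f (y + P) = f y"
  shows "f (y + of_int k * P) = f y"
proof -
  have nat: "f (z + real n * P) = f z" for z n
  proof (induction n)
    case (Suc n)
    have "z + real (Suc n) * P = (z + real n * P) + P" by (simp add: algebra_simps)
    then show ?case using Suc assms by metis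
  qed simp
  show ?thesis
  proof (cases "k \<ge> 0")
    case True then show ?thesis using nat[of y "nat k"] by simp
  next
    case False
    then have "y = (y + of_int k * P) + real (nat (-k)) * P" by simp
    then show ?thesis using nat[of "y + of_int k * P" "nat (-k)"] by metis
  qed
qed

lemma periodic_reduce:
  fixes f :: "real \<Rightarrow> 'a"
  assumes "\<And>y. f (y + P) = f y" "P > 0"
  obtains y0 where "y0 \<in> {0..P}" "f y = f y0"
proof
  define k where "k = \<lfloor>y / P\<rfloor>"
  have "of_int k \<le> y / P" "y / P < of_int k + 1" unfolding k_def by linarith+
  with assms(2) show "y - of_int k * P \<in> {0..P}" by (auto simp: field_simps)
  show "f y = f (y - of_int k * P)"
    using periodic_shift_int[of f P "y - of_int k * P" k, OF assms(1)] by simp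
qed

lemma periodic_has_vector_derivative:
  assumes per: "\<And>y. f (y + P) = f y" and "(f has_vector_derivative f') (at (y + P))"
  shows "(f has_vector_derivative f') (at y)"
proof -
  have "(f \<circ> (\<lambda>y. y + P) has_vector_derivative 1 *\<^sub>R f') (at y)"
    by (intro vector_diff_chain_at assms(2)) (auto intro!: derivative_eq_intros)
  then show ?thesis by (simp add: o_def per)
qed

definition doubly_periodic :: "real \<Rightarrow> vfield \<Rightarrow> bool" where
  "doubly_periodic T F \<longleftrightarrow>
     (\<forall>s t x. F s (t + T) x = F s t x) \<and> (\<forall>s t x. F s t (x + 2 * pi) = F s t x)"

lemma doubly_periodic_pd:
  assumes sm: "smooth3 F" and per: "doubly_periodic T F"
  shows "doubly_periodic T (pd_s F)" "doubly_periodic T (pd_t F)" "doubly_periodic T (pd_x F)"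
proof -
  have pt: "F s (t + T) x = F s t x" and px: "F s t (x + 2 * pi) = F s t x" for s t x
    using per by (simp_all add: doubly_periodic_def)
  have pt': "F s (t + T) = F s t" for s t
    using pt by (simp add: fun_eq_iff)
  have "pd_t F s (t + T) x = pd_t F s t x" for s t x
    using periodic_has_vector_derivative[of "\<lambda>\<tau>. F s \<tau> x", OF pt has_vector_derivative_pd(2)[OF sm]]
      has_vector_derivative_pd(2)[OF sm] by (metis vector_derivative_unique_at)
  moreover have "pd_x F s t (x + 2 * pi) = pd_x F s t x" for s t x
    using periodic_has_vector_derivative[of "\<lambda>\<xi>. F s t \<xi>", OF px has_vector_derivative_pd(3)[OF sm]]
      has_vector_derivative_pd(3)[OF sm] by (metis vector_derivative_unique_at)
  ultimately show "doubly_periodic T (pd_s F)" "doubly_periodic T (pd_t F)"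
    "doubly_periodic T (pd_x F)"
    unfolding doubly_periodic_def by (simp_all add: pd_s_def pd_t_def pd_x_def pt pt' px)
qed

lemma doubly_periodic_zero:
  assumes "doubly_periodic T F" "T > 0"
    and "\<And>t x. t \<in> {0..T} \<Longrightarrow> x \<in> {0..2 * pi} \<Longrightarrow> F s t x = 0"
  shows "F s t x = 0"
proof -
  obtain t0 where "t0 \<in> {0..T}" "F s t x = F s t0 x"
    using periodic_reduce[of "\<lambda>t. F s t x" T] assms(1,2) by (auto simp: doubly_periodic_def)
  moreover obtain x0 where "x0 \<in> {0..2 * pi}" "F s t0 x = F s t0 x0"
    using periodic_reduce[of "\<lambda>x. F s t0 x" "2 * pi"] assms(1) by (auto simp: doubly_periodic_def)
  ultimately show ?thesis using assms(3) by simp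
qed

section \<open>Integration over the torus\<close>

definition torus_inner :: "real \<Rightarrow> vfield \<Rightarrow> vfield \<Rightarrow> real \<Rightarrow> real" where
  "torus_inner T F G s =
     integral (cbox (0, 0) (T, 2 * pi)) (\<lambda>p. F s (fst p) (snd p) \<bullet> G s (fst p) (snd p))"

lemma torus_inner_commute: "torus_inner T F G s = torus_inner T G F s"
  unfolding torus_inner_def by (simp add: inner_commute)

lemma continuous_on_inner_smooth3:
  assumes "smooth3 F" "smooth3 G"
  shows "continuous_on S (\<lambda>p. F s (fst p) (snd p) \<bullet> G s (fst p) (snd p))"
  by (intro continuous_on_inner smooth3_continuous_on_comp assms continuous_intros)

lemma integrable_inner_smooth3:
  assumes "smooth3 F" "smooth3 G"
  shows "(\<lambda>p. F s (fst p) (snd p) \<bullet> G s (fst p) (snd p)) integrable_on cbox a b"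
  by (intro integrable_continuous continuous_on_inner_smooth3 assms)

lemma torus_inner_self_nonneg: "smooth3 F \<Longrightarrow> T \<ge> 0 \<Longrightarrow> torus_inner T F F s \<ge> 0"
  unfolding torus_inner_def by (rule integral_nonneg[OF integrable_inner_smooth3]) simp_all

lemma torus_inner_add_left:
  assumes "smooth3 F" "smooth3 G" "smooth3 H"
  shows "torus_inner T (\<lambda>s t x. F s t x + G s t x) H s = torus_inner T F H s + torus_inner T G H s"
  unfolding torus_inner_def inner_add_left
  by (intro integral_add integrable_inner_smooth3 assms)

lemma torus_inner_add_right:
  assumes "smooth3 F" "smooth3 G" "smooth3 H"
  shows "torus_inner T H (\<lambda>s t x. F s t x + G s t x) s = torus_inner T H F s + torus_inner T H G s"
  using torus_inner_add_left[OF assms] by (simp add: torus_inner_commute)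

lemma integral_cbox_iterated:
  fixes f :: "real \<Rightarrow> real \<Rightarrow> real"
  assumes "continuous_on UNIV (\<lambda>p. f (fst p) (snd p))"
  shows "integral (cbox (a, c) (b, d)) (\<lambda>p. f (fst p) (snd p))
           = integral (cbox a b) (\<lambda>t. integral (cbox c d) (\<lambda>x. f t x))"
    and "integral (cbox (a, c) (b, d)) (\<lambda>p. f (fst p) (snd p))
           = integral (cbox c d) (\<lambda>x. integral (cbox a b) (\<lambda>t. f t x))"
proof -
  have c: "continuous_on (cbox (a, c) (b, d)) (\<lambda>p. f (fst p) (snd p))"
    by (rule continuous_on_subset[OF assms]) simp
  show ts: "integral (cbox (a, c) (b, d)) (\<lambda>p. f (fst p) (snd p))
      = integral (cbox a b) (\<lambda>t. integral (cbox c d) (\<lambda>x. f t x))"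
    using integral_prod_continuous[OF c] by simp
  have "continuous_on (cbox (a, c) (b, d)) (\<lambda>(x, y). f x y)"
    using c by (simp add: case_prod_beta')
  then show "integral (cbox (a, c) (b, d)) (\<lambda>p. f (fst p) (snd p))
      = integral (cbox c d) (\<lambda>x. integral (cbox a b) (\<lambda>t. f t x))"
    unfolding ts by (rule integral_swap_continuous)
qed

lemma integration_by_parts_inner:
  fixes u v :: "real \<Rightarrow> 'a::real_inner"
  assumes du: "\<And>y. (u has_vector_derivative u' y) (at y)"
    and dv: "\<And>y. (v has_vector_derivative v' y) (at y)"
    and cu: "continuous_on {a..b} u'" and cv: "continuous_on {a..b} v'"
    and ends: "u b \<bullet> v b = u a \<bullet> v a" and "a \<le> b"
  shows "integral {a..b} (\<lambda>y. u' y \<bullet> v y) = - integral {a..b} (\<lambda>y. u y \<bullet> v' y)"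
proof -
  have "((\<lambda>y. u y \<bullet> v' y + u' y \<bullet> v y) has_integral (u b \<bullet> v b - u a \<bullet> v a)) {a..b}"
    by (rule fundamental_theorem_of_calculus[OF \<open>a \<le> b\<close> has_vector_derivative_at_within])
      (rule bounded_bilinear.has_vector_derivative[OF bounded_bilinear_inner du dv])
  then have "integral {a..b} (\<lambda>y. u y \<bullet> v' y + u' y \<bullet> v y) = 0"
    using ends by (simp add: integral_unique)
  moreover have "continuous_on {a..b} u" "continuous_on {a..b} v"
    using du dv by (meson continuous_at_imp_continuous_on has_vector_derivative_continuous)+
  then have "integral {a..b} (\<lambda>y. u y \<bullet> v' y + u' y \<bullet> v y)
      = integral {a..b} (\<lambda>y. u y \<bullet> v' y) + integral {a..b} (\<lambda>y. u' y \<bullet> v y)"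
    by (intro integral_add integrable_continuous_interval continuous_on_inner cu cv)
  ultimately show ?thesis by linarith
qed

lemma torus_inner_pd_t_by_parts:
  assumes F: "smooth3 F" "doubly_periodic T F" and G: "smooth3 G" "doubly_periodic T G"
    and "T \<ge> 0"
  shows "torus_inner T (pd_t F) G s = - torus_inner T F (pd_t G) s"
proof -
  have by_parts: "integral {0..T} (\<lambda>t. pd_t F s t x \<bullet> G s t x)
      = - integral {0..T} (\<lambda>t. F s t x \<bullet> pd_t G s t x)" for x
  proof (rule integration_by_parts_inner[OF has_vector_derivative_pd(2)[OF F(1)]
        has_vector_derivative_pd(2)[OF G(1)]])
    show "F s T x \<bullet> G s T x = F s 0 x \<bullet> G s 0 x"
      using F(2) G(2) unfolding doubly_periodic_def by (metis add_0)
  qed (intro smooth3_continuous_on_comp smooth3_pd F G continuous_intros \<open>T \<ge> 0\<close>)+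
  have "continuous_on UNIV (\<lambda>p. pd_t F s (fst p) (snd p) \<bullet> G s (fst p) (snd p))"
    and "continuous_on UNIV (\<lambda>p. F s (fst p) (snd p) \<bullet> pd_t G s (fst p) (snd p))"
    by (intro continuous_on_inner_smooth3 smooth3_pd F G)+
  from this[THEN integral_cbox_iterated(2)] show ?thesis
    unfolding torus_inner_def by (simp add: by_parts)
qed

lemma torus_inner_pd_x_by_parts:
  assumes F: "smooth3 F" "doubly_periodic T F" and G: "smooth3 G" "doubly_periodic T G"
  shows "torus_inner T (pd_x F) G s = - torus_inner T F (pd_x G) s"
proof -
  have by_parts: "integral {0..2 * pi} (\<lambda>x. pd_x F s t x \<bullet> G s t x)
      = - integral {0..2 * pi} (\<lambda>x. F s t x \<bullet> pd_x G s t x)" for t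
  proof (rule integration_by_parts_inner[OF has_vector_derivative_pd(3)[OF F(1)]
        has_vector_derivative_pd(3)[OF G(1)]])
    show "F s t (2 * pi) \<bullet> G s t (2 * pi) = F s t 0 \<bullet> G s t 0"
      using F(2) G(2) unfolding doubly_periodic_def by (metis add_0)
    show "0 \<le> 2 * pi" by simp
  qed (rule smooth3_continuous_on_comp[of _ _ "\<lambda>_. s" "\<lambda>_. t" "\<lambda>\<xi>. \<xi>"];
        simp add: smooth3_pd F G continuous_on_id)+
  have "continuous_on UNIV (\<lambda>p. pd_x F s (fst p) (snd p) \<bullet> G s (fst p) (snd p))"
    and "continuous_on UNIV (\<lambda>p. F s (fst p) (snd p) \<bullet> pd_x G s (fst p) (snd p))"
    by (intro continuous_on_inner_smooth3 smooth3_pd F G)+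
  from this[THEN integral_cbox_iterated(1)] show ?thesis
    unfolding torus_inner_def by (simp add: by_parts)
qed

section \<open>The spatial operator\<close>

definition mat_apply :: "real^4^4 \<Rightarrow> vfield \<Rightarrow> vfield" where
  "mat_apply M F = (\<lambda>s t x. M *v F s t x)"

lemma pd_mat_apply:
  assumes "smooth3 F"
  shows "pd_s (mat_apply M F) = mat_apply M (pd_s F)" "pd_t (mat_apply M F) = mat_apply M (pd_t F)"
    "pd_x (mat_apply M F) = mat_apply M (pd_x F)"
proof -
  note mult_deriv = bounded_linear.has_vector_derivative[OF matrix_vector_mul_bounded_linear,
      THEN vector_derivative_at]
  show "pd_s (mat_apply M F) = mat_apply M (pd_s F)" "pd_t (mat_apply M F) = mat_apply M (pd_t F)"
    "pd_x (mat_apply M F) = mat_apply M (pd_x F)"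
    by (simp_all add: fun_eq_iff mat_apply_def pd_s_def pd_t_def pd_x_def mult_deriv
        has_vector_derivative_pd[OF assms, unfolded pd_s_def pd_t_def pd_x_def])
qed

lemma pd_word_mat_apply:
  "smooth3 F \<Longrightarrow> pd_word w (mat_apply M F) = mat_apply M (pd_word w F)"
proof (induction w)
  case (Cons a w)
  then show ?case using pd_mat_apply[OF smooth3_pd_word[OF Cons.prems]] by (cases a) simp_all
qed simp

lemma smooth3_mat_apply:
  assumes "smooth3 F"
  shows "smooth3 (mat_apply M F)"
  unfolding smooth3_def pd_word_mat_apply[OF assms]
proof (intro allI)
  fix w p
  have "(\<lambda>(s,t,x). pd_word w F s t x) differentiable (at p)"
    using assms unfolding smooth3_def by blast
  then have "((*v) M \<circ> (\<lambda>(s,t,x). pd_word w F s t x)) differentiable (at p)"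
    by (rule differentiable_chain_at[OF _ bounded_linear_imp_differentiable])
      (rule matrix_vector_mul_bounded_linear)
  then show "(\<lambda>(s, t, x). mat_apply M (pd_word w F) s t x) differentiable at p"
    by (simp add: o_def mat_apply_def case_prod_beta')
qed

lemma doubly_periodic_mat_apply: "doubly_periodic T F \<Longrightarrow> doubly_periodic T (mat_apply M F)"
  by (simp add: doubly_periodic_def mat_apply_def)

lemma torus_inner_mat_apply_skew:
  assumes "\<And>a b. (M *v a) \<bullet> b = - (a \<bullet> (M *v b))"
  shows "torus_inner T (mat_apply M F) G s = - torus_inner T F (mat_apply M G) s"
  by (simp add: torus_inner_def mat_apply_def assms)

lemma vector_4 [simp]:
  "(vector [a, b, c, d] :: 'a::zero^4) $ 1 = a" "(vector [a, b, c, d] :: 'a::zero^4) $ 2 = b"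
  "(vector [a, b, c, d] :: 'a::zero^4) $ 3 = c" "(vector [a, b, c, d] :: 'a::zero^4) $ 4 = d"
  by (simp_all add: vector_def)

lemma inner_vec_4: "(a::real^4) \<bullet> b = a$1 * b$1 + a$2 * b$2 + a$3 * b$3 + a$4 * b$4"
  by (simp add: inner_vec_def sum_4)

lemma M1_mult: "M1 *v a = vector [- a$2, a$1, a$4, - a$3]"
  by (simp add: M1_def vec_eq_iff forall_4 matrix_vector_mult_def sum_4 vector_def)

lemma M2_mult: "M2 *v a = vector [a$3, - a$4, - a$1, a$2]"
  by (simp add: M2_def vec_eq_iff forall_4 matrix_vector_mult_def sum_4 vector_def)

lemma M1_skew: "(M1 *v a) \<bullet> b = - (a \<bullet> (M1 *v b))"
  by (simp add: M1_mult inner_vec_4 algebra_simps)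

lemma M2_skew: "(M2 *v a) \<bullet> b = - (a \<bullet> (M2 *v b))"
  by (simp add: M2_mult inner_vec_4 algebra_simps)

definition spatial_op :: "vfield \<Rightarrow> vfield" where
  "spatial_op F = (\<lambda>s t x. M1 *v pd_t F s t x + M2 *v pd_x F s t x)"

lemma torus_inner_spatial_op_symmetric:
  assumes F: "smooth3 F" "doubly_periodic T F" and G: "smooth3 G" "doubly_periodic T G"
    and "T \<ge> 0"
  shows "torus_inner T (spatial_op F) G s = torus_inner T F (spatial_op G) s"
proof -
  note sm = smooth3_pd smooth3_mat_apply smooth3_pd[OF smooth3_mat_apply] F(1) G(1)
  have G': "smooth3 (mat_apply M G)" "doubly_periodic T (mat_apply M G)" for M
    by (rule smooth3_mat_apply[OF G(1)], rule doubly_periodic_mat_apply[OF G(2)])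
  have op: "spatial_op H = (\<lambda>s t x. mat_apply M1 (pd_t H) s t x + mat_apply M2 (pd_x H) s t x)"
    for H by (simp add: spatial_op_def mat_apply_def)
  have "torus_inner T (spatial_op F) G s
      = torus_inner T (mat_apply M1 (pd_t F)) G s + torus_inner T (mat_apply M2 (pd_x F)) G s"
    unfolding op by (intro torus_inner_add_left sm)
  also have "\<dots> = - torus_inner T (pd_t F) (mat_apply M1 G) s
                    - torus_inner T (pd_x F) (mat_apply M2 G) s"
    by (simp add: torus_inner_mat_apply_skew M1_skew M2_skew)
  also have "\<dots> = torus_inner T F (pd_t (mat_apply M1 G)) s
                    + torus_inner T F (pd_x (mat_apply M2 G)) s"
    using torus_inner_pd_t_by_parts[OF F G' \<open>T \<ge> 0\<close>] torus_inner_pd_x_by_parts[OF F G']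
    by simp
  also have "\<dots> = torus_inner T F (spatial_op G) s"
    unfolding op pd_mat_apply[OF G(1)] by (intro torus_inner_add_right[symmetric] sm)
  finally show ?thesis .
qed

definition flow_solution :: "vfield \<Rightarrow> bool" where
  "flow_solution F \<longleftrightarrow> (\<forall>s t x. pd_s F s t x + spatial_op F s t x = 0)"

lemma flow_solution_pd_s:
  assumes sm: "smooth3 F" and sol: "flow_solution F"
  shows "flow_solution (pd_s F)"
  unfolding flow_solution_def
proof (intro allI)
  fix s t x
  have "((\<lambda>\<sigma>. pd_s F \<sigma> t x + spatial_op F \<sigma> t x) has_vector_derivative
      pd_s (pd_s F) s t x + M1 *v pd_s (pd_t F) s t x + M2 *v pd_s (pd_x F) s t x) (at s)"
    unfolding spatial_op_def add.assoc
    by (intro has_vector_derivative_add has_vector_derivative_pd smooth3_pd sm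
        bounded_linear.has_vector_derivative[OF matrix_vector_mul_bounded_linear])
  moreover have "((\<lambda>\<sigma>. pd_s F \<sigma> t x + spatial_op F \<sigma> t x) has_vector_derivative 0) (at s)"
    using sol by (simp add: flow_solution_def has_vector_derivative_const)
  ultimately show "pd_s (pd_s F) s t x + spatial_op (pd_s F) s t x = 0"
    by (simp add: vector_derivative_unique_at spatial_op_def smooth3_pd_commute[OF sm] add.assoc)
qed

lemma has_real_derivative_torus_inner:
  assumes F: "smooth3 F" and G: "smooth3 G"
  shows "(torus_inner T F G has_real_derivative
            torus_inner T (pd_s F) G s + torus_inner T F (pd_s G) s) (at s)"
proof -
  define f' where "f' \<sigma> p = pd_s F \<sigma> (fst p) (snd p) \<bullet> G \<sigma> (fst p) (snd p)
    + F \<sigma> (fst p) (snd p) \<bullet> pd_s G \<sigma> (fst p) (snd p)" for \<sigma> p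
  have "((\<lambda>\<sigma>. integral (cbox (0, 0) (T, 2 * pi)) (\<lambda>p. F \<sigma> (fst p) (snd p) \<bullet> G \<sigma> (fst p) (snd p)))
      has_vector_derivative integral (cbox (0, 0) (T, 2 * pi)) (f' s)) (at s within UNIV)"
  proof (rule leibniz_rule_vector_derivative)
    show "((\<lambda>\<sigma>. F \<sigma> (fst p) (snd p) \<bullet> G \<sigma> (fst p) (snd p)) has_vector_derivative f' \<sigma> p)
        (at \<sigma> within UNIV)" for \<sigma> p
      using bounded_bilinear.has_vector_derivative[OF bounded_bilinear_inner
          has_vector_derivative_pd(1)[OF F] has_vector_derivative_pd(1)[OF G]]
      by (simp add: f'_def add.commute)
    show "continuous_on (UNIV \<times> cbox (0, 0) (T, 2 * pi)) (\<lambda>(\<sigma>, p). f' \<sigma> p)"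
      unfolding f'_def case_prod_beta'
      by (intro continuous_intros smooth3_continuous_on_comp smooth3_pd F G)
  qed (auto intro: integrable_inner_smooth3 F G)
  moreover have "integral (cbox (0, 0) (T, 2 * pi)) (f' s)
      = torus_inner T (pd_s F) G s + torus_inner T F (pd_s G) s"
    unfolding f'_def torus_inner_def by (intro integral_add integrable_inner_smooth3 smooth3_pd F G)
  ultimately show ?thesis
    unfolding has_real_derivative_iff_has_vector_derivative torus_inner_def by simp
qed

section \<open>Convexity of the energy\<close>

lemma nn_integral_lborel_ge_interval:
  fixes h :: "real \<Rightarrow> real"
  assumes "a \<le> b" "c \<ge> 0" "\<And>s. s \<in> {a..b} \<Longrightarrow> c \<le> h s"
  shows "ennreal (c * (b - a)) \<le> (\<integral>\<^sup>+ s. ennreal (h s) \<partial>lborel)"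
proof -
  have "ennreal (c * (b - a)) = (\<integral>\<^sup>+ s. ennreal c * indicator {a..b} s \<partial>lborel)"
    using assms(1,2) by (simp add: nn_integral_cmult_indicator ennreal_mult)
  also have "\<dots> \<le> (\<integral>\<^sup>+ s. ennreal (h s) \<partial>lborel)"
    using assms(3) by (intro nn_integral_mono) (auto simp: indicator_def intro: ennreal_leI)
  finally show ?thesis .
qed

lemma convex_nonneg_integrable_eq_0:
  fixes h k k' :: "real \<Rightarrow> real"
  assumes dh: "\<And>s. (h has_real_derivative k s) (at s)"
    and dk: "\<And>s. (k has_real_derivative k' s) (at s)"
    and k'_nonneg: "\<And>s. k' s \<ge> 0" and h_nonneg: "\<And>s. h s \<ge> 0"
    and finite: "(\<integral>\<^sup>+ s. ennreal (h s) \<partial>lborel) < \<infinity>"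
  shows "h s0 = 0"
proof (rule ccontr)
  assume "h s0 \<noteq> 0"
  with h_nonneg have c: "h s0 > 0" by (simp add: order_less_le)
  obtain r where r: "(\<integral>\<^sup>+ s. ennreal (h s) \<partial>lborel) = ennreal r" "r \<ge> 0"
    using finite by (cases "\<integral>\<^sup>+ s. ennreal (h s) \<partial>lborel") auto
  define L where "L = r / h s0 + 1"
  have "L \<ge> 0" using r(2) c by (simp add: L_def)
  have k_mono: "k a \<le> k b" if "a \<le> b" for a b
    by (rule DERIV_nonneg_imp_nondecreasing[OF that]) (use dk k'_nonneg in blast)
  \<comment> \<open>As \<open>h' = k\<close> is nondecreasing, \<open>h \<ge> h s0\<close> on \<open>[s0, \<infinity>)\<close> if \<open>k s0 \<ge> 0\<close>,
    and on \<open>(-\<infinity>, s0]\<close> otherwise.\<close>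
  obtain a where "\<And>s. s \<in> {a..a + L} \<Longrightarrow> h s0 \<le> h s"
  proof (cases "k s0 \<ge> 0")
    case True
    have "h s0 \<le> h s" if "s \<in> {s0..s0 + L}" for s
      using that by (intro DERIV_nonneg_imp_nondecreasing[of s0 s h])
        (use dh k_mono[of s0] True in \<open>fastforce+\<close>)
    then show thesis by (rule that)
  next
    case False
    have "h s0 \<le> h s" if "s \<in> {s0 - L..s0}" for s
      using that by (intro DERIV_nonpos_imp_nonincreasing[of s s0 h])
        (use dh k_mono[of _ s0] False in \<open>fastforce+\<close>)
    then show thesis using that[of "s0 - L"] by simp
  qed
  from nn_integral_lborel_ge_interval[of a "a + L" "h s0" h, OF _ _ this] \<open>L \<ge> 0\<close> c r
  have "h s0 * L \<le> r" by simp
  moreover have "h s0 * L > r" using c by (simp add: L_def field_simps)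
  ultimately show False by simp
qed

lemma torus_nn_integral_norm2:
  assumes V: "smooth3 V"
  shows "(\<integral>\<^sup>+ t. (\<integral>\<^sup>+ x. ennreal ((norm (V s t x))\<^sup>2) * indicator {0..2 * pi} x \<partial>lborel)
            * indicator {0..T} t \<partial>lborel) = ennreal (torus_inner T V V s)"
proof -
  define g where "g t = integral {0..2 * pi} (\<lambda>x. V s t x \<bullet> V s t x)" for t
  have cont: "continuous_on {0..2 * pi} (\<lambda>x. V s t x \<bullet> V s t x)" for t
    by (intro continuous_on_inner smooth3_continuous_on_comp continuous_on_const continuous_on_id V)
  have inner: "(\<integral>\<^sup>+ x. ennreal ((norm (V s t x))\<^sup>2) * indicator {0..2 * pi} x \<partial>lborel)
      = ennreal (g t)" for t
  proof -
    have "((\<lambda>x. V s t x \<bullet> V s t x) has_integral g t) {0..2 * pi}"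
      unfolding g_def by (intro integrable_integral integrable_continuous_interval cont)
    from nn_integral_has_integral_lebesgue'[OF _ this] show ?thesis
      by (simp add: power2_norm_eq_inner)
  qed
  have "g t \<ge> 0" for t
    unfolding g_def by (rule integral_nonneg[OF integrable_continuous_interval[OF cont]]) simp
  moreover have g_cont: "continuous_on UNIV g"
  proof -
    have "continuous_on (UNIV \<times> cbox 0 (2 * pi)) (\<lambda>(t, x). V s t x \<bullet> V s t x)"
      unfolding case_prod_beta' by (intro continuous_on_inner_smooth3 V)
    from integral_continuous_on_param[OF this] show ?thesis unfolding g_def by simp
  qed
  then have "(g has_integral integral {0..T} g) {0..T}"
    by (intro integrable_integral integrable_continuous_interval continuous_on_subset[OF g_cont])
      simp
  ultimately have outer:
      "(\<integral>\<^sup>+ t. ennreal (g t) * indicator {0..T} t \<partial>lborel) = ennreal (integral {0..T} g)"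
    using nn_integral_has_integral_lebesgue' by blast
  have "integral {0..T} g = torus_inner T V V s"
    unfolding torus_inner_def integral_cbox_iterated(1)[OF continuous_on_inner_smooth3[OF V V]] g_def
    by simp
  then show ?thesis using inner outer by simp
qed

lemma torus_inner_self_eq_0_imp_zero:
  assumes sm: "smooth3 F" and per: "doubly_periodic T F" and "T > 0"
    and zero: "torus_inner T F F s = 0"
  shows "F s t x = 0"
proof (rule doubly_periodic_zero[OF per \<open>T > 0\<close>])
  fix t x assume "t \<in> {0..T}" "x \<in> {0..2 * pi}"
  then have mem: "(t, x) \<in> cbox (0, 0) (T, 2 * pi)" by (simp add: cbox_interval)
  have ne: "box (0, 0) (T, 2 * pi) \<noteq> {}"
    using \<open>T > 0\<close> by (simp add: box_ne_empty inner_Pair Basis_prod_def)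
  have "(\<lambda>p. F s (fst p) (snd p) \<bullet> F s (fst p) (snd p)) integrable_on cbox (0, 0) (T, 2 * pi)"
    by (rule integrable_inner_smooth3[OF sm sm])
  with zero have int0:
      "((\<lambda>p. F s (fst p) (snd p) \<bullet> F s (fst p) (snd p)) has_integral 0) (cbox (0, 0) (T, 2 * pi))"
    by (simp add: torus_inner_def has_integral_integral)
  have "(\<lambda>p. F s (fst p) (snd p) \<bullet> F s (fst p) (snd p)) (t, x) = 0"
    by (rule has_integral_0_cbox_imp_0[OF continuous_on_inner_smooth3[OF sm sm] _ int0 ne mem]) simp
  then show "F s t x = 0" by simp
qed

lemma torus_inner_pd_s_pd_s_flow_solution:
  assumes sm: "smooth3 V" and per: "doubly_periodic T V" and sol: "flow_solution V" and "T \<ge> 0"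
  shows "torus_inner T (pd_s (pd_s V)) V s = torus_inner T (pd_s V) (pd_s V) s"
proof -
  have "flow_solution (pd_s V)" by (rule flow_solution_pd_s[OF sm sol])
  then have X: "pd_s (pd_s V) = (\<lambda>s t x. - spatial_op (pd_s V) s t x)"
    by (simp add: fun_eq_iff flow_solution_def eq_neg_iff_add_eq_0)
  have AV: "spatial_op V = (\<lambda>s t x. - pd_s V s t x)"
    using sol by (simp add: fun_eq_iff flow_solution_def add_eq_0_iff2 minus_equation_iff)
  have "torus_inner T (pd_s (pd_s V)) V s = - torus_inner T (spatial_op (pd_s V)) V s"
    unfolding X by (simp add: torus_inner_def)
  also have "\<dots> = - torus_inner T (pd_s V) (spatial_op V) s"
    using torus_inner_spatial_op_symmetric[OF smooth3_pd(1)[OF sm] doubly_periodic_pd(1)[OF sm per]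
        sm per \<open>T \<ge> 0\<close>] by simp
  also have "\<dots> = torus_inner T (pd_s V) (pd_s V) s"
    unfolding AV by (simp add: torus_inner_def)
  finally show ?thesis .
qed

lemma flow_solution_torus_norm_eq_0:
  assumes sm: "smooth3 V" and per: "doubly_periodic T V" and sol: "flow_solution V" and "T \<ge> 0"
    and finite: "(\<integral>\<^sup>+ s. ennreal (torus_inner T V V s) \<partial>lborel) < \<infinity>"
  shows "torus_inner T V V s = 0"
proof -
  define W where "W = pd_s V"
  define k where "k s = torus_inner T W V s + torus_inner T V W s" for s
  define k' where "k' s = (torus_inner T (pd_s W) V s + torus_inner T W W s)
    + (torus_inner T W W s + torus_inner T V (pd_s W) s)" for s
  note sm' = sm smooth3_pd(1)[OF sm] smooth3_pd(1)[OF smooth3_pd(1)[OF sm]]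
  show ?thesis
  proof (rule convex_nonneg_integrable_eq_0[OF _ _ _ _ finite])
    show "(torus_inner T V V has_real_derivative k s) (at s)" for s
      unfolding k_def W_def by (rule has_real_derivative_torus_inner[OF sm sm])
    show "(k has_real_derivative k' s) (at s)" for s
      unfolding k_def k'_def W_def by (intro DERIV_add has_real_derivative_torus_inner sm')
    \<comment> \<open>\<open>k' s = 2 \<langle>pd_s W, V\<rangle> + 2 \<parallel>W\<parallel>\<^sup>2 = 4 \<parallel>W\<parallel>\<^sup>2\<close> at time \<open>s\<close>\<close>
    show "0 \<le> k' s" for s
      using torus_inner_pd_s_pd_s_flow_solution[OF sm per sol \<open>T \<ge> 0\<close>, of s]
        torus_inner_commute[of T V "pd_s W" s] torus_inner_self_nonneg[OF sm'(2) \<open>T \<ge> 0\<close>, of s]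
      unfolding k'_def W_def by simp
    show "0 \<le> torus_inner T V V s" for s
      by (rule torus_inner_self_nonneg[OF sm \<open>T \<ge> 0\<close>])
  qed
qed

lemma flow_solution_finite_energy_pd_s_eq_0:
  assumes "T > 0" and sm: "smooth3 Z" and per: "doubly_periodic T Z" and sol: "flow_solution Z"
    and energy: "(\<integral>\<^sup>+ s. (\<integral>\<^sup>+ t. (\<integral>\<^sup>+ x.
                    ennreal ((norm (pd_s Z s t x))\<^sup>2) * indicator {0..2 * pi} x \<partial>lborel)
                    * indicator {0..T} t \<partial>lborel) \<partial>lborel) < \<infinity>"
  shows "pd_s Z s t x = 0"
proof (rule torus_inner_self_eq_0_imp_zero)
  show "torus_inner T (pd_s Z) (pd_s Z) s = 0"
    using energy \<open>T > 0\<close>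
    by (intro flow_solution_torus_norm_eq_0 smooth3_pd doubly_periodic_pd flow_solution_pd_s
        sm per sol) (simp_all add: torus_nn_integral_norm2 smooth3_pd sm)
qed (use smooth3_pd doubly_periodic_pd sm per \<open>T > 0\<close> in auto)

section \<open>Transport along characteristics\<close>

lemma has_vector_derivative_along_line:
  assumes sm: "smooth3 F"
  shows "((\<lambda>\<tau>. F s (a + \<tau>) (b + \<beta> * \<tau>)) has_vector_derivative
            (pd_t F s (a + \<tau>) (b + \<beta> * \<tau>) + \<beta> *\<^sub>R pd_x F s (a + \<tau>) (b + \<beta> * \<tau>))) (at \<tau>)"
proof -
  define t where "t = a + \<tau>"
  define x where "x = b + \<beta> * \<tau>"
  define U where "U = (\<lambda>(s::real, t::real, x::real). F s t x)"
  obtain D where D: "(U has_derivative D) (at (s, t, x))"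
    using smooth3_differentiable[OF sm, of "(s, t, x)"] unfolding U_def differentiable_def by blast
  have lin: "linear D" using D by (simp add: has_derivative_linear)
  have comp: "((\<lambda>h. U (g h)) has_vector_derivative D v) (at h0)"
    if "(g has_derivative (\<lambda>h. h *\<^sub>R v)) (at h0)" "g h0 = (s, t, x)"
    for g :: "real \<Rightarrow> real \<times> real \<times> real" and v h0
  proof -
    have "(U \<circ> g has_derivative D \<circ> (\<lambda>h. h *\<^sub>R v)) (at h0)"
      by (rule diff_chain_at[OF that(1)]) (use D that(2) in simp)
    then show ?thesis
      unfolding has_vector_derivative_def o_def by (simp add: linear_scale[OF lin])
  qed
  have "((\<lambda>\<tau>'. U (s, \<tau>', x)) has_vector_derivative D (0, 1, 0)) (at t)"
    by (rule comp) (auto intro!: derivative_eq_intros simp: fun_eq_iff)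
  then have Dt: "D (0, 1, 0) = pd_t F s t x"
    using has_vector_derivative_pd(2)[OF sm, of s x t] unfolding U_def
    by (simp add: vector_derivative_unique_at)
  have "((\<lambda>\<xi>. U (s, t, \<xi>)) has_vector_derivative D (0, 0, 1)) (at x)"
    by (rule comp) (auto intro!: derivative_eq_intros simp: fun_eq_iff)
  then have Dx: "D (0, 0, 1) = pd_x F s t x"
    using has_vector_derivative_pd(3)[OF sm, of s t x] unfolding U_def
    by (simp add: vector_derivative_unique_at)
  have "((\<lambda>\<tau>'. U (s, a + \<tau>', b + \<beta> * \<tau>')) has_vector_derivative D (0, 1, \<beta>)) (at \<tau>)"
    by (rule comp) (auto intro!: derivative_eq_intros simp: fun_eq_iff t_def x_def)
  moreover have "D (0, 1, \<beta>) = D (0, 1, 0) + \<beta> *\<^sub>R D (0, 0, 1)"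
    using linear_add[OF lin, of "(0, 1, 0)" "\<beta> *\<^sub>R (0, 0, 1)"]
      linear_scale[OF lin, of \<beta> "(0::real, 0::real, 1::real)"] by simp
  ultimately show ?thesis unfolding U_def Dt Dx t_def x_def by simp
qed

lemma inner_const_along_line:
  assumes sm: "smooth3 F" and transport: "\<And>t x. e \<bullet> (pd_t F s t x + \<beta> *\<^sub>R pd_x F s t x) = 0"
  shows "e \<bullet> F s (a + \<tau>) (b + \<beta> * \<tau>) = e \<bullet> F s a b"
proof -
  have "((\<lambda>\<tau>. e \<bullet> F s (a + \<tau>) (b + \<beta> * \<tau>)) has_real_derivative 0) (at \<tau>' within UNIV)" for \<tau>'
    using bounded_linear.has_vector_derivative[OF bounded_linear_inner_right[of e]
        has_vector_derivative_along_line[OF sm, of s a b \<beta> \<tau>']] transport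
    unfolding has_real_derivative_iff_has_vector_derivative by simp
  from has_field_derivative_zero_constant[OF convex_UNIV this]
  obtain c where "\<And>\<tau>. e \<bullet> F s (a + \<tau>) (b + \<beta> * \<tau>) = c" by blast
  from this[of \<tau>] this[of 0] show ?thesis by simp
qed

lemma continuous_incommensurable_periods_const:
  fixes \<phi> :: "real \<Rightarrow> 'a::metric_space"
  assumes cont: "continuous_on UNIV \<phi>" and "P > 0"
    and per_P: "\<And>y. \<phi> (y + P) = \<phi> y" and per_Q: "\<And>y. \<phi> (y + Q) = \<phi> y"
    and irrational: "Q / P \<notin> \<rat>"
  shows "\<phi> (y + \<delta>) = \<phi> y"
proof (rule ccontr)
  assume "\<phi> (y + \<delta>) \<noteq> \<phi> y"
  then obtain d where "d > 0"
    and d: "\<And>z. dist z (y + \<delta>) < d \<Longrightarrow> dist (\<phi> z) (\<phi> (y + \<delta>)) < dist (\<phi> y) (\<phi> (y + \<delta>))"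
    using cont unfolding continuous_on_iff by (metis UNIV_I zero_less_dist_iff)
  \<comment> \<open>Kronecker: the integer combinations \<open>k Q - h P\<close> are dense in \<open>\<real>\<close>.\<close>
  obtain h k :: int where "\<bar>of_int k * (Q / P) - of_int h - \<delta> / P\<bar> < d / P"
    using sequence_of_fractional_parts_is_dense[OF irrational] \<open>d > 0\<close> \<open>P > 0\<close>
    by (metis divide_pos_pos)
  then have "\<bar>(of_int k * Q - of_int h * P - \<delta>) / P\<bar> < d / P"
    using \<open>P > 0\<close> by (simp add: diff_divide_distrib)
  then have close: "\<bar>of_int k * Q - of_int h * P - \<delta>\<bar> < d"
    using \<open>P > 0\<close> by (simp add: abs_divide divide_less_cancel)
  define z where "z = (y + of_int k * Q) + of_int (- h) * P"
  have "\<phi> z = \<phi> y"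
    unfolding z_def periodic_shift_int[of \<phi>, OF per_P] periodic_shift_int[of \<phi>, OF per_Q] ..
  moreover have "dist z (y + \<delta>) < d"
    using close by (simp add: z_def dist_real_def algebra_simps)
  ultimately show False using d by (metis dist_commute less_irrefl)
qed

lemma transport_mean_zero_imp_zero:
  assumes "T > 0" and sm: "smooth3 Z" and per: "doubly_periodic T Z"
    and irrational: "T / (2 * pi) \<notin> \<rat>" and \<beta>: "\<beta> = 1 \<or> \<beta> = -1"
    and transport: "\<And>t x. e \<bullet> (pd_t Z s t x + \<beta> *\<^sub>R pd_x Z s t x) = 0"
    and mean: "integral (cbox (0, 0) (T, 2 * pi)) (\<lambda>p. Z s (fst p) (snd p)) = 0"
  shows "e \<bullet> Z s t x = 0"
proof -
  define \<phi> where "\<phi> y = e \<bullet> Z s 0 y" for y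
  have along: "e \<bullet> Z s t x = \<phi> (x - \<beta> * t)" for t x
    using inner_const_along_line[OF sm transport, of 0 t "x - \<beta> * t"] unfolding \<phi>_def by simp
  have per_2pi: "\<phi> (y + 2 * pi) = \<phi> y" for y
    using per unfolding doubly_periodic_def \<phi>_def by simp
  have "\<phi> (y - \<beta> * T) = \<phi> y" for y
    using along[of T y] per unfolding doubly_periodic_def \<phi>_def by (metis add_0)
  with \<beta> have per_T: "\<phi> (y + T) = \<phi> y" for y
    by (metis add_diff_cancel diff_minus_eq_add mult_1 mult_minus_left)
  have "continuous_on UNIV \<phi>"
    unfolding \<phi>_def by (intro continuous_on_inner smooth3_continuous_on_comp continuous_intros sm)
  then have const: "e \<bullet> Z s t x = \<phi> 0" for t x
    using continuous_incommensurable_periods_const[OF _ _ per_2pi per_T irrational, of 0 "x - \<beta> * t"]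
      along by simp
  have "integral (cbox (0, 0) (T, 2 * pi)) (\<lambda>p. e \<bullet> Z s (fst p) (snd p)) = e \<bullet> 0"
  proof -
    have "(\<lambda>p. Z s (fst p) (snd p)) integrable_on cbox (0, 0) (T, 2 * pi)"
      by (intro integrable_continuous smooth3_continuous_on_comp sm continuous_intros)
    from integral_linear[OF this bounded_linear_inner_right[of e]] mean show ?thesis
      by (simp add: o_def)
  qed
  moreover have
      "integral (cbox (0, 0) (T, 2 * pi)) (\<lambda>p. e \<bullet> Z s (fst p) (snd p)) = T * (2 * pi) * \<phi> 0"
    using const \<open>T > 0\<close> pi_gt_zero by (simp add: content_Pair)
  ultimately have "T * (2 * pi) * \<phi> 0 = 0" by simp
  then show ?thesis using const \<open>T > 0\<close> by simp
qed

lemma spatial_op_kernel_mean_zero_imp_zero: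
  assumes "T > 0" and sm: "smooth3 Z" and per: "doubly_periodic T Z"
    and irrational: "T / (2 * pi) \<notin> \<rat>"
    and kernel: "\<And>t x. spatial_op Z s t x = 0"
    and mean: "integral (cbox (0, 0) (T, 2 * pi)) (\<lambda>p. Z s (fst p) (snd p)) = 0"
  shows "Z s t x = 0"
proof -
  \<comment> \<open>In coordinates the kernel equation reads \<open>\<partial>\<^sub>t Z\<^sub>1 = \<partial>\<^sub>x Z\<^sub>4\<close>, \<open>\<partial>\<^sub>t Z\<^sub>4 = \<partial>\<^sub>x Z\<^sub>1\<close>,
    \<open>\<partial>\<^sub>t Z\<^sub>2 = \<partial>\<^sub>x Z\<^sub>3\<close>, \<open>\<partial>\<^sub>t Z\<^sub>3 = \<partial>\<^sub>x Z\<^sub>2\<close>, so \<open>Z\<^sub>1 \<plusminus> Z\<^sub>4\<close> and \<open>Z\<^sub>2 \<plusminus> Z\<^sub>3\<close> are transported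
    along the lines \<open>x \<plusminus> t = const\<close>.\<close>
  have c: "pd_t Z s t x $ 1 = pd_x Z s t x $ 4 \<and> pd_t Z s t x $ 2 = pd_x Z s t x $ 3 \<and>
     pd_t Z s t x $ 3 = pd_x Z s t x $ 2 \<and> pd_t Z s t x $ 4 = pd_x Z s t x $ 1" for t x
    using kernel[of t x] unfolding spatial_op_def M1_mult M2_mult by (simp add: vec_eq_iff forall_4)
  note transport = transport_mean_zero_imp_zero[OF \<open>T > 0\<close> sm per irrational _ _ mean]
  have "vector [1, 0, 0, 1] \<bullet> Z s t x = 0" "vector [0, 1, 1, 0] \<bullet> Z s t x = 0"
    by (rule transport[of "-1"]; use c in \<open>simp add: inner_vec_4\<close>)+
  moreover have "vector [1, 0, 0, -1] \<bullet> Z s t x = 0" "vector [0, 1, -1, 0] \<bullet> Z s t x = 0"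
    by (rule transport[of 1]; use c in \<open>simp add: inner_vec_4\<close>)+
  ultimately show ?thesis by (simp add: inner_vec_4 vec_eq_iff forall_4)
qed

lemma irrationality_measure_rational:
  assumes "r \<in> \<rat>"
  shows "irrationality_measure r = \<infinity>"
proof -
  obtain a b :: int where ab: "b > 0" "r = of_int a / of_int b"
    using assms by (metis Rats_cases')
  \<comment> \<open>No constant can work, as the approximation \<open>a / b\<close> is exact.\<close>
  have no_exponent: "{ereal \<rho> | \<rho>. \<exists>c>0. \<forall>p::int. \<forall>q::int. q > 0 \<longrightarrow>
            c / (real_of_int q) powr \<rho> < \<bar>r - real_of_int p / real_of_int q\<bar>} = {}"
  proof safe
    fix \<rho> c :: real
    assume "c > 0" and "\<forall>p::int. \<forall>q::int. q > 0 \<longrightarrow>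
            c / (real_of_int q) powr \<rho> < \<bar>r - real_of_int p / real_of_int q\<bar>"
    then have "c / (real_of_int b) powr \<rho> < \<bar>r - real_of_int a / real_of_int b\<bar>"
      using ab(1) by blast
    moreover have "c / (real_of_int b) powr \<rho> > 0" using ab(1) \<open>c > 0\<close> by simp
    ultimately show "ereal \<rho> \<in> {}" using ab(2) by simp
  qed
  have "irrationality_measure r = Inf {}"
    unfolding irrationality_measure_def no_exponent ..
  then show ?thesis by (simp add: top_ereal_def)
qed

lemma funpow_pd_zero:
  "(pd_x ^^ n) (\<lambda>s t x. 0) = (\<lambda>s t x. 0)" "(pd_t ^^ n) (\<lambda>s t x. 0) = (\<lambda>s t x. 0)"
  by (induction n) (simp_all add: pd_x_def pd_t_def)

theorem lemma3p2:
  fixes T :: real and Z :: "real \<Rightarrow> real \<Rightarrow> real \<Rightarrow> real^4"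
  assumes T_pos: "T > 0"
    and irr: "irrationality_measure (2 * pi / T) = 2"
    and per_t: "\<And>s t x. Z s (t + T) x = Z s t x"
    and per_x: "\<And>s t x. Z s t (x + 2 * pi) = Z s t x"
    and smooth: "smooth3 Z"
    and eqn: "\<And>s t x. pd_s Z s t x + M1 *v pd_t Z s t x + M2 *v pd_x Z s t x = 0"
    and energy: "(\<integral>\<^sup>+ s. (\<integral>\<^sup>+ t. (\<integral>\<^sup>+ x.
                    ennreal ((norm (pd_s Z s t x))\<^sup>2) * indicator {0..2 * pi} x \<partial>lborel)
                    * indicator {0..T} t \<partial>lborel) \<partial>lborel) < \<infinity>"
    and mean0: "\<And>s. integral (cbox (0, 0) (T, 2 * pi)) (\<lambda>(t, x). Z s t x) = 0"
  shows "\<forall>a b::nat. \<forall>\<epsilon>>0. \<exists>S. \<forall>s\<ge>S. \<forall>t x.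
           norm (((pd_t ^^ a) ((pd_x ^^ b) Z)) s t x) < \<epsilon>"
proof -
  have per: "doubly_periodic T Z" using per_t per_x by (simp add: doubly_periodic_def)
  have sol: "flow_solution Z" using eqn by (simp add: flow_solution_def spatial_op_def add.assoc)
  have "2 * pi / T \<notin> \<rat>" using irr irrationality_measure_rational by force
  then have irrational: "T / (2 * pi) \<notin> \<rat>" by (metis Rats_inverse inverse_divide)
  have "pd_s Z s t x = 0" for s t x
    by (rule flow_solution_finite_energy_pd_s_eq_0[OF T_pos smooth per sol energy])
  then have "spatial_op Z s t x = 0" for s t x
    using sol by (simp add: flow_solution_def)
  then have "Z s t x = 0" for s t x
    using mean0 by (intro spatial_op_kernel_mean_zero_imp_zero[OF T_pos smooth per irrational])
      (simp_all add: case_prod_beta')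
  then have "Z = (\<lambda>s t x. 0)" by (intro ext)
  then show ?thesis by (simp add: funpow_pd_zero)
qed

end
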